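(* Let $m$ be a given positive integer and let $f:C(\mathbb{R}^{n})\rightarrow\mathbb{R}$ be a distribution of the form $f = \sum_{k = 1}^{m}a_{k}\delta_{x_{k}}$, with $x_{i}\in\mathbb{R}^{n}$, $a_{i}\in\mathbb{R}\setminus\{0\}$, $1\leq i\leq m$, such that $x_{i}\neq x_{j}$ and $a_{i}\neq a_{j}$ whenever $i\neq j$. Assume that the spherical mean transform of $f$ is given at $\frac{1}{2}(n\cdot m(m - 1) + 2n + 2)$ points such that there is no hyperplane in $\mathbb{R}^{n}$ which contains more than $n$ of these given points. Then the points $x_{1},\dots,x_{m}$ and the amplitudes $a_{1},\dots,a_{m}$ can be uniquely recovered.
   Context: $C(\mathbb{R}^{n})$ denotes the continuous real functions on $\mathbb{R}^{n}$, $C(\mathbb{R}^{+})$ the continuous real functions on $\mathbb{R}^{+}=[0,\infty)$. For $x_{0}\in\mathbb{R}^{n}$, $\delta_{x_{0}}$ is the distribution $\delta_{x_{0}}(\phi)=\phi(x_{0})$ on $C(\mathbb{R}^{n})$. For a function $\phi\in C(\mathbb{R}^n)$ and a point $y\in\mathbb{R}^{n}$, the spherical mean transform (SMT) is $R_{y}\phi(t) = t^{n-1}\int_{|\theta|=1}\phi(y+t\theta)\,d\theta$, $t\geq 0$; its dual is $R_{y}^{\ast}\Lambda(z)=\Lambda(|y-z|)$ for $\Lambda\in C(\mathbb{R}^{+})$. For a distribution $T:C(\mathbb{R}^{n})\to\mathbb{R}$, the SMT of $T$ at $y$ is the map $R_{y}T:C(\mathbb{R}^{+})\to\mathbb{R}$,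 $(R_{y}T)(\Lambda)=T(\Lambda(|y-\cdot|))$. "The SMT of $f$ is given at a point $y$" means $R_{y}f$ is known. *)

theory Defs
  imports "HOL-Analysis.Analysis"
begin

text \<open>A distribution on C(R^n) is modelled as a real-valued functional on functions
  'a \<Rightarrow> real (only its values on continuous functions matter).\<close>
definition dirac_comb :: "nat \<Rightarrow> (nat \<Rightarrow> real) \<Rightarrow> (nat \<Rightarrow> 'a) \<Rightarrow> (('a \<Rightarrow> real) \<Rightarrow> real)" where
  "dirac_comb m a x = (\<lambda>\<phi>. \<Sum>k\<in>{1..m}. a k * \<phi> (x k))"

definition SMT :: "'a::metric_space \<Rightarrow> (('a \<Rightarrow> real) \<Rightarrow> real) \<Rightarrow> ((real \<Rightarrow> real) \<Rightarrow> real)" where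
  "SMT y T = (\<lambda>\<Lambda>. T (\<lambda>z. \<Lambda> (dist y z)))"

definition SMT_agree :: "'a::metric_space \<Rightarrow> (('a \<Rightarrow> real) \<Rightarrow> real) \<Rightarrow> (('a \<Rightarrow> real) \<Rightarrow> real) \<Rightarrow> bool" where
  "SMT_agree y T S \<longleftrightarrow> (\<forall>\<Lambda>. continuous_on {0..} \<Lambda> \<longrightarrow> SMT y T \<Lambda> = SMT y S \<Lambda>)"

definition admissible :: "nat \<Rightarrow> (nat \<Rightarrow> real) \<Rightarrow> (nat \<Rightarrow> 'a) \<Rightarrow> bool" where
  "admissible m a x \<longleftrightarrow> inj_on x {1..m} \<and> inj_on a {1..m} \<and> (\<forall>k\<in>{1..m}. a k \<noteq> 0)"

definition no_hyperplane_more_than :: "nat \<Rightarrow> ('a::euclidean_space) set \<Rightarrow> bool" where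
  "no_hyperplane_more_than n P \<longleftrightarrow> (\<forall>w c. w \<noteq> 0 \<longrightarrow> card {p\<in>P. w \<bullet> p = c} \<le> n)"

end

theory Submission imports Defs begin

text \<open>A continuous function of the radius can single out any one of finitely many radii, so
  the spherical mean transform at y determines, for every r, the total amplitude of the atoms
  on the sphere of radius r about y.  If the atoms lie on pairwise distinct spheres about y
  (y is separating), these totals are the single amplitudes; as the amplitudes are distinct
  and nonzero, the second configuration is then separating at y too, and each x_k is matched
  with the unique z_j of the same amplitude, at the same distance from y.  Non-separating
  points lie on one of the (m choose 2) bisecting hyperplanes of the x_k, each containing at
  most n given points, so more than n separating points remain; if x_k \<noteq> z_j they would all
  lie on the bisecting hyperplane of x_k and z_j.\<close>

lemma dist_eq_imp_bisector:
  fixes u v p :: "'a::real_inner"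
  assumes "dist p u = dist p v"
  shows "(v - u) \<bullet> p = (v \<bullet> v - u \<bullet> u) / 2"
proof -
  have "(p - u) \<bullet> (p - u) = (p - v) \<bullet> (p - v)"
    using assms by (simp add: dist_norm dot_square_norm)
  then show ?thesis
    by (simp add: inner_diff_left inner_diff_right inner_commute algebra_simps)
qed

lemma card_equidistant_le:
  fixes P :: "'a::euclidean_space set"
  assumes "finite P" and "no_hyperplane_more_than d P" and "u \<noteq> v"
  shows "card {p\<in>P. dist p u = dist p v} \<le> d"
proof -
  let ?H = "{p\<in>P. (v - u) \<bullet> p = (v \<bullet> v - u \<bullet> u) / 2}"
  have "card {p\<in>P. dist p u = dist p v} \<le> card ?H"
    using assms(1) dist_eq_imp_bisector by (intro card_mono) auto
  also have "\<dots> \<le> d"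
    using assms(2,3) unfolding no_hyperplane_more_than_def by (metis right_minus_eq)
  finally show ?thesis .
qed

lemma continuous_selector_of_finite:
  fixes D :: "real set"
  assumes "finite D"
  obtains L :: "real \<Rightarrow> real"
  where "continuous_on UNIV L" and "\<And>t. t \<in> D \<Longrightarrow> L t = (if t = r then 1 else 0)"
proof -
  define L where "L t = (\<Prod>s\<in>D-{r}. (t - s) / (r - s))" for t
  have "continuous_on UNIV L" unfolding L_def by (intro continuous_intros) auto
  moreover have "L t = (if t = r then 1 else 0)" if "t \<in> D" for t
    using that assms by (auto simp: L_def prod_zero_iff)
  ultimately show ?thesis using that by blast
qed

lemma SMT_dirac_comb:
  "SMT y (dirac_comb m a x) \<Lambda> = (\<Sum>k\<in>{1..m}. a k * \<Lambda> (dist y (x k)))"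
  by (simp add: SMT_def dirac_comb_def)

lemma SMT_agree_sphere_sums:
  assumes "SMT_agree y (dirac_comb m a x) (dirac_comb m b z)"
  shows "(\<Sum>k | k \<in> {1..m} \<and> dist y (x k) = r. a k) = (\<Sum>k | k \<in> {1..m} \<and> dist y (z k) = r. b k)"
proof -
  let ?D = "(\<lambda>k. dist y (x k)) ` {1..m} \<union> (\<lambda>k. dist y (z k)) ` {1..m}"
  obtain L :: "real \<Rightarrow> real"
    where L: "continuous_on UNIV L" "\<And>t. t \<in> ?D \<Longrightarrow> L t = (if t = r then 1 else 0)"
    using continuous_selector_of_finite[of ?D r] by auto
  have sphere_sum: "(\<Sum>k\<in>{1..m}. c k * L (dist y (w k))) = (\<Sum>k | k \<in> {1..m} \<and> dist y (w k) = r. c k)"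
    if "w = x \<or> w = z" for c and w :: "nat \<Rightarrow> 'a"
  proof -
    have "(\<Sum>k\<in>{1..m}. c k * L (dist y (w k))) = (\<Sum>k\<in>{1..m}. if dist y (w k) = r then c k else 0)"
      using that by (intro sum.cong) (auto simp: L(2))
    also have "\<dots> = (\<Sum>k | k \<in> {1..m} \<and> dist y (w k) = r. c k)"
      by (rule sum.inter_filter[symmetric]) simp
    finally show ?thesis .
  qed
  have "SMT y (dirac_comb m a x) L = SMT y (dirac_comb m b z) L"
    using assms L(1) continuous_on_subset unfolding SMT_agree_def by blast
  then show ?thesis
    using sphere_sum[of x a] sphere_sum[of z b] by (simp add: SMT_dirac_comb)
qed

definition separating :: "'a::metric_space \<Rightarrow> nat \<Rightarrow> (nat \<Rightarrow> 'a) \<Rightarrow> bool" where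
  "separating y m x \<longleftrightarrow> inj_on (\<lambda>k. dist y (x k)) {1..m}"

lemma sum_level_set_inj:
  assumes "inj_on f A" and "k \<in> A"
  shows "(\<Sum>j | j \<in> A \<and> f j = f k. g j) = g k"
proof -
  have "{j. j \<in> A \<and> f j = f k} = {k}"
    using assms by (auto dest: inj_onD)
  then show ?thesis by simp
qed

lemma separating_transfer:
  assumes "separating y m x" and "\<forall>k\<in>{1..m}. a k \<noteq> 0"
    and sums: "\<And>r. (\<Sum>k | k \<in> {1..m} \<and> dist y (x k) = r. a k) = (\<Sum>k | k \<in> {1..m} \<and> dist y (z k) = r. b k)"
  shows "separating y m z"
proof -
  let ?R = "(\<lambda>k. dist y (x k)) ` {1..m}" and ?S = "(\<lambda>k. dist y (z k)) ` {1..m}"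
  have "?R \<subseteq> ?S"
  proof
    fix r assume "r \<in> ?R"
    then obtain k where k: "k \<in> {1..m}" "r = dist y (x k)" by auto
    have "(\<Sum>j | j \<in> {1..m} \<and> dist y (x j) = r. a j) = a k"
      using sum_level_set_inj[of "\<lambda>k. dist y (x k)", OF _ k(1)] assms(1) k(2)
      unfolding separating_def by simp
    then have "(\<Sum>j | j \<in> {1..m} \<and> dist y (z j) = r. b j) = a k"
      using sums[of r] by simp
    then have "{j. j \<in> {1..m} \<and> dist y (z j) = r} \<noteq> {}"
      using assms(2) k(1) by (metis sum.empty)
    then show "r \<in> ?S" by auto
  qed
  then have "card ?R \<le> card ?S"
    by (intro card_mono) auto
  moreover have "card ?R = card {1..m}"
    using assms(1) unfolding separating_def by (rule card_image)
  moreover have "card ?S \<le> card {1..m}"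
    by (rule card_image_le) simp
  ultimately show ?thesis
    unfolding separating_def by (simp add: inj_on_iff_eq_card)
qed

lemma separating_match:
  assumes "separating y m x" and "separating y m z" and "k \<in> {1..m}" and "a k \<noteq> 0"
    and sums: "\<And>r. (\<Sum>k | k \<in> {1..m} \<and> dist y (x k) = r. a k) = (\<Sum>k | k \<in> {1..m} \<and> dist y (z k) = r. b k)"
  obtains j where "j \<in> {1..m}" "b j = a k" "dist y (z j) = dist y (x k)"
proof -
  let ?r = "dist y (x k)"
  have "(\<Sum>j | j \<in> {1..m} \<and> dist y (x j) = ?r. a j) = a k"
    using sum_level_set_inj[of "\<lambda>k. dist y (x k)", OF _ assms(3)] assms(1)
    unfolding separating_def by simp
  then have sum_z: "(\<Sum>j | j \<in> {1..m} \<and> dist y (z j) = ?r. b j) = a k"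
    using sums[of ?r] by simp
  then have "{j. j \<in> {1..m} \<and> dist y (z j) = ?r} \<noteq> {}"
    using assms(4) by (metis sum.empty)
  then obtain j where j: "j \<in> {1..m}" "dist y (z j) = ?r"
    by blast
  have "(\<Sum>j' | j' \<in> {1..m} \<and> dist y (z j') = dist y (z j). b j') = b j"
    using sum_level_set_inj[of "\<lambda>k. dist y (z k)", OF _ j(1)] assms(2)
    unfolding separating_def by simp
  then have "b j = a k"
    using sum_z j(2) by simp
  with j that show ?thesis by blast
qed

lemma card_non_separating_le:
  fixes P :: "'a::euclidean_space set"
  assumes "finite P" and "no_hyperplane_more_than d P" and "inj_on x {1..m}"
  shows "card {y\<in>P. \<not> separating y m x} \<le> d * (m choose 2)"
proof -
  define Pairs where "Pairs = {B. B \<subseteq> {1..m} \<and> card B = 2}"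
  define H where "H B = {p\<in>P. \<not> inj_on (\<lambda>k. dist p (x k)) B}" for B
  have fin_Pairs: "finite Pairs"
    unfolding Pairs_def by (rule finite_subset[of _ "Pow {1..m}"]) auto
  have "{y\<in>P. \<not> separating y m x} \<subseteq> (\<Union>B\<in>Pairs. H B)"
  proof
    fix y assume y: "y \<in> {y\<in>P. \<not> separating y m x}"
    then obtain i j where "i \<in> {1..m}" "j \<in> {1..m}" "i \<noteq> j" "dist y (x i) = dist y (x j)"
      unfolding separating_def inj_on_def by auto
    then have "{i, j} \<in> Pairs" "y \<in> H {i, j}"
      using y by (auto simp: Pairs_def H_def)
    then show "y \<in> (\<Union>B\<in>Pairs. H B)" by blast
  qed
  then have "card {y\<in>P. \<not> separating y m x} \<le> card (\<Union>B\<in>Pairs. H B)"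
    by (intro card_mono) (auto simp: H_def assms(1) fin_Pairs)
  also have "\<dots> \<le> (\<Sum>B\<in>Pairs. card (H B))"
    by (rule card_UN_le[OF fin_Pairs])
  also have "\<dots> \<le> (\<Sum>B\<in>Pairs. d)"
  proof (rule sum_mono)
    fix B assume "B \<in> Pairs"
    then have "B \<subseteq> {1..m}" "card B = 2"
      by (auto simp: Pairs_def)
    then obtain i j where ij: "B = {i, j}" "i \<noteq> j" "i \<in> {1..m}" "j \<in> {1..m}"
      by (auto simp: card_2_iff)
    then have "H B = {p\<in>P. dist p (x i) = dist p (x j)}"
      by (auto simp: H_def)
    moreover have "x i \<noteq> x j"
      using inj_on_eq_iff[OF assms(3) ij(3,4)] ij(2) by simp
    ultimately show "card (H B) \<le> d"
      using card_equidistant_le[OF assms(1,2)] by simp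
  qed
  also have "\<dots> = d * (m choose 2)"
    using n_subsets[of "{1..m}" 2] by (simp add: Pairs_def)
  finally show ?thesis .
qed

lemma recover_dirac_comb_subset:
  fixes P :: "'a::euclidean_space set"
  assumes "finite P" and "d * (m choose 2) + d < card P"
    and nh: "no_hyperplane_more_than d P"
    and "admissible m a x" and "admissible m b z"
    and agree: "\<forall>y\<in>P. SMT_agree y (dirac_comb m a x) (dirac_comb m b z)"
  shows "(\<lambda>k. (x k, a k)) ` {1..m} \<subseteq> (\<lambda>k. (z k, b k)) ` {1..m}"
proof -
  have inj_x: "inj_on x {1..m}" and a_nz: "\<forall>k\<in>{1..m}. a k \<noteq> 0" and inj_b: "inj_on b {1..m}"
    using assms(4,5) unfolding admissible_def by auto
  define G where "G = {y\<in>P. separating y m x}"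
  have sums: "(\<Sum>k | k \<in> {1..m} \<and> dist y (x k) = r. a k) = (\<Sum>k | k \<in> {1..m} \<and> dist y (z k) = r. b k)"
    if "y \<in> G" for y r
  proof -
    have "y \<in> P" using that by (simp add: G_def)
    with agree show ?thesis by (intro SMT_agree_sphere_sums) blast
  qed
  have "G \<subseteq> P" "{y\<in>P. \<not> separating y m x} = P - G"
    by (auto simp: G_def)
  then have "card P = card G + card {y\<in>P. \<not> separating y m x}"
    using assms(1) card_Diff_subset[of G P] card_mono[of P G] finite_subset[of G P] by simp
  with card_non_separating_le[OF assms(1) nh inj_x] assms(2)
  have card_G: "d < card G" by linarith
  then obtain y0 where "y0 \<in> G"
    by (metis card.empty ex_in_conv not_less0)
  show ?thesis
  proof
    fix q assume "q \<in> (\<lambda>k. (x k, a k)) ` {1..m}"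
    then obtain k where k: "k \<in> {1..m}" "q = (x k, a k)" by auto
    have match: "\<exists>j\<in>{1..m}. b j = a k \<and> dist y (z j) = dist y (x k)" if "y \<in> G" for y
    proof -
      have sep_x: "separating y m x" using that by (simp add: G_def)
      have sep_z: "separating y m z" using separating_transfer[OF sep_x a_nz sums[OF that]] .
      show ?thesis
        using separating_match[OF sep_x sep_z k(1) _ sums[OF that]] a_nz k(1) by blast
    qed
    obtain j where j: "j \<in> {1..m}" "b j = a k"
      using match[OF \<open>y0 \<in> G\<close>] by blast
    \<comment> \<open>distinct amplitudes force the same partner z_j at every separating point\<close>
    have equidistant: "dist y (x k) = dist y (z j)" if "y \<in> G" for y
    proof -
      obtain j' where "j' \<in> {1..m}" "b j' = a k" "dist y (z j') = dist y (x k)"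
        using match \<open>y \<in> G\<close> by blast
      moreover have "j' = j"
        using inj_onD[OF inj_b, of j' j] j \<open>j' \<in> {1..m}\<close> \<open>b j' = a k\<close> by simp
      ultimately show ?thesis by simp
    qed
    have "x k = z j"
    proof (rule ccontr)
      assume "x k \<noteq> z j"
      have "card G \<le> card {p\<in>P. dist p (x k) = dist p (z j)}"
        using assms(1) equidistant by (intro card_mono) (auto simp: G_def)
      also have "\<dots> \<le> d"
        using card_equidistant_le[OF assms(1) nh \<open>x k \<noteq> z j\<close>] .
      finally show False using card_G by simp
    qed
    then show "q \<in> (\<lambda>k. (z k, b k)) ` {1..m}" using k j by force
  qed
qed

theorem theorem3p1:
  fixes m :: nat and P :: "(real ^ 'n) set"
    and a b :: "nat \<Rightarrow> real" and x z :: "nat \<Rightarrow> real ^ 'n"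
  assumes "m \<ge> 1"
    and "finite P"
    and "card P = (CARD('n) * m * (m - 1) + 2 * CARD('n) + 2) div 2"
    and "no_hyperplane_more_than CARD('n) P"
    and "admissible m a x" and "admissible m b z"
    and "\<forall>y\<in>P. SMT_agree y (dirac_comb m a x) (dirac_comb m b z)"
  shows "(\<lambda>k. (x k, a k)) ` {1..m} = (\<lambda>k. (z k, b k)) ` {1..m}"
proof -
  have "even (m * (m - 1))"
    by (cases "even m") auto
  then have double: "CARD('n) * m * (m - 1) = 2 * (CARD('n) * (m choose 2))"
    by (simp add: choose_two mult.assoc)
  have "card P = CARD('n) * (m choose 2) + CARD('n) + 1"
    using assms(3) unfolding double by simp
  then have card_P: "CARD('n) * (m choose 2) + CARD('n) < card P"
    by simp
  have "\<forall>y\<in>P. SMT_agree y (dirac_comb m b z) (dirac_comb m a x)"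
    using assms(7) unfolding SMT_agree_def by metis
  then show ?thesis
    using recover_dirac_comb_subset[OF assms(2) card_P assms(4)] assms(5,6,7)
    by (intro subset_antisym) blast+
qed

end
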